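(* Let $\varphi\colon (A,m,K)\to (B,n,L)$ be a local homomorphism of noetherian local rings and $I$ a proper ideal of $A$. Then $0\leq \delta_A(I)-\delta^\varphi_B(I)\leq \operatorname{rd}(\varphi)$.
   Context: All rings are commutative and noetherian with identity. A local homomorphism satisfies $\varphi(m)\subseteq n$; $K=A/m$, $L=B/n$. $\delta_A(I)=\dim_K\big((I+m^2)/m^2\big)$ and $\delta^\varphi_B(I)=\dim_L\big((IB+n^2)/n^2\big)$. The regularity defect $\operatorname{rd}(\varphi)$ is the $L$-dimension of the kernel of the natural $L$-linear map $m/m^2\otimes_K L\to n/n^2$, $\bar x\otimes\bar b\mapsto \overline{\varphi(x)b}$. *)

theory Defs
  imports Main
begin

text \<open>Commutative rings are rendered as types of class comm_ring_1: the ring A is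
the type 'a, the ring B is the type 'b.\<close>

definition is_ideal :: "'a::comm_ring_1 set \<Rightarrow> bool" where
  "is_ideal I \<longleftrightarrow> 0 \<in> I \<and> (\<forall>x\<in>I. \<forall>y\<in>I. x + y \<in> I) \<and> (\<forall>x\<in>I. \<forall>r. r * x \<in> I)"

definition ideal_gen :: "'a::comm_ring_1 set \<Rightarrow> 'a set" where
  "ideal_gen F = {\<Sum>x\<in>F. c x * x | c. True}"

definition noetherian :: "'a::comm_ring_1 itself \<Rightarrow> bool" where
  "noetherian (t::'a itself) \<longleftrightarrow> (\<forall>I::'a set. is_ideal I \<longrightarrow> (\<exists>F. finite F \<and> F \<subseteq> I \<and> I = ideal_gen F))"

definition maximal_ideal :: "'a::comm_ring_1 set \<Rightarrow> bool" where
  "maximal_ideal M \<longleftrightarrow> is_ideal M \<and> M \<noteq> UNIV \<and>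
     (\<forall>J. is_ideal J \<longrightarrow> M \<subseteq> J \<longrightarrow> J = M \<or> J = UNIV)"

definition local_ring :: "'a::comm_ring_1 set \<Rightarrow> bool" where
  "local_ring M \<longleftrightarrow> maximal_ideal M \<and> (\<forall>M'. maximal_ideal M' \<longrightarrow> M' = M)"

definition ring_hom :: "('a::comm_ring_1 \<Rightarrow> 'b::comm_ring_1) \<Rightarrow> bool" where
  "ring_hom f \<longleftrightarrow> f 0 = 0 \<and> f 1 = 1 \<and> (\<forall>x y. f (x + y) = f x + f y) \<and> (\<forall>x y. f (x * y) = f x * f y)"

definition ideal_mult :: "'a::comm_ring_1 set \<Rightarrow> 'a set \<Rightarrow> 'a set" where
  "ideal_mult I J = {\<Sum>i<k. x i * y i | (k::nat) x y. \<forall>i<k. x i \<in> I \<and> y i \<in> J}"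

definition ideal_add :: "'a::comm_ring_1 set \<Rightarrow> 'a set \<Rightarrow> 'a set" where
  "ideal_add I J = {x + y | x y. x \<in> I \<and> y \<in> J}"

definition ext_ideal :: "('a::comm_ring_1 \<Rightarrow> 'b::comm_ring_1) \<Rightarrow> 'a set \<Rightarrow> 'b set" where
  "ext_ideal f I = {\<Sum>i<k. f (a i) * b i | (k::nat) a b. \<forall>i<k. a i \<in> I}"

text \<open>Linear independence of v_0..v_(k-1) in the R/M-vector space S/N (M maximal,
  M S \<subseteq> N \<subseteq> S), written with representatives: scalars are elements of R taken mod M.\<close>
definition indep_mod :: "'a::comm_ring_1 set \<Rightarrow> 'a set \<Rightarrow> nat \<Rightarrow> (nat \<Rightarrow> 'a) \<Rightarrow> bool" where
  "indep_mod M N k v \<longleftrightarrow> (\<forall>c. (\<Sum>i<k. c i * v i) \<in> N \<longrightarrow> (\<forall>i<k. c i \<in> M))"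

definition dim_mod :: "'a::comm_ring_1 set \<Rightarrow> 'a set \<Rightarrow> 'a set \<Rightarrow> nat" where
  "dim_mod M N S = Sup {k. \<exists>v. (\<forall>i<k. v i \<in> S) \<and> indep_mod M N k v}"

definition delta_A :: "'a::comm_ring_1 set \<Rightarrow> 'a set \<Rightarrow> nat" where
  "delta_A m I = dim_mod m (ideal_mult m m) (ideal_add I (ideal_mult m m))"

definition delta_B :: "('a::comm_ring_1 \<Rightarrow> 'b::comm_ring_1) \<Rightarrow> 'b set \<Rightarrow> 'a set \<Rightarrow> nat" where
  "delta_B f n I = dim_mod n (ideal_mult n n) (ideal_add (ext_ideal f I) (ideal_mult n n))"

definition cotangent_basis :: "'a::comm_ring_1 set \<Rightarrow> nat \<Rightarrow> (nat \<Rightarrow> 'a) \<Rightarrow> bool" where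
  "cotangent_basis m d x \<longleftrightarrow> (\<forall>i<d. x i \<in> m) \<and> indep_mod m (ideal_mult m m) d x \<and>
     (\<forall>y\<in>m. \<exists>c. y - (\<Sum>i<d. c i * x i) \<in> ideal_mult m m)"

text \<open>Using the basis x of m/m^2, m/m^2 \<otimes>_K L is identified with L^d (tuples of
  elements of B modulo n), and the natural map becomes
  (b_i) \<mapsto> sum_i phi(x_i) b_i mod n^2. Its kernel is
  {b. sum_i phi(x_i) b_i \<in> n^2}; rd_wrt is its L-dimension.\<close>
definition tuple_indep :: "'b::comm_ring_1 set \<Rightarrow> nat \<Rightarrow> nat \<Rightarrow> (nat \<Rightarrow> nat \<Rightarrow> 'b) \<Rightarrow> bool" where
  "tuple_indep n d k w \<longleftrightarrow>
     (\<forall>c. (\<forall>i<d. (\<Sum>j<k. c j * w j i) \<in> n) \<longrightarrow> (\<forall>j<k. c j \<in> n))"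

definition rd_wrt :: "('a::comm_ring_1 \<Rightarrow> 'b::comm_ring_1) \<Rightarrow> 'b set \<Rightarrow> nat \<Rightarrow> (nat \<Rightarrow> 'a) \<Rightarrow> nat" where
  "rd_wrt f n d x = Sup {k. \<exists>w. (\<forall>j<k. (\<Sum>i<d. f (x i) * w j i) \<in> ideal_mult n n) \<and> tuple_indep n d k w}"

definition rd :: "('a::comm_ring_1 \<Rightarrow> 'b::comm_ring_1) \<Rightarrow> 'a set \<Rightarrow> 'b set \<Rightarrow> nat" where
  "rd f m n = (let (d, x) = (SOME p. cotangent_basis m (fst p) (snd p)) in rd_wrt f n d x)"

end

theory Submission
  imports Defs "HOL.Modules" "HOL-Library.Function_Algebras"
begin

text \<open>If \<open>u\<close> is a basis of \<open>(I + m\<^sup>2)/m\<^sup>2\<close>, the images \<open>\<phi> u\<close> span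
  \<open>(IB + n\<^sup>2)/n\<^sup>2\<close>, whence \<open>\<delta>\<^sup>\<phi>\<^sub>B(I) \<le> \<delta>\<^sub>A(I)\<close>. For the other bound write
  \<open>u\<^sub>j \<equiv> \<Sum>\<^sub>i a\<^sub>j\<^sub>i x\<^sub>i\<close> modulo \<open>m\<^sup>2\<close> in a basis \<open>x\<close> of \<open>m/m\<^sup>2\<close>. The coordinate
  vectors \<open>a\<^sub>j\<close> are independent in \<open>K\<^sup>d\<close>, hence their images are independent in \<open>L\<^sup>d\<close>, and the
  natural map \<open>L\<^sup>d \<rightarrow> n/n\<^sup>2\<close> sends them to \<open>\<phi> u\<^sub>j\<close> modulo \<open>n\<^sup>2\<close>. Rank--nullity for this
  map bounds their number \<open>\<delta>\<^sub>A(I)\<close> by \<open>rd(\<phi>) + \<delta>\<^sup>\<phi>\<^sub>B(I)\<close>.\<close>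

section \<open>Ideals\<close>

context
  fixes I :: "'a::comm_ring_1 set"
  assumes I: "is_ideal I"
begin

lemma is_ideal_zero: "0 \<in> I"
  using I unfolding is_ideal_def by blast

lemma is_ideal_add: "x \<in> I \<Longrightarrow> y \<in> I \<Longrightarrow> x + y \<in> I"
  using I unfolding is_ideal_def by blast

lemma is_ideal_mult_left: "x \<in> I \<Longrightarrow> r * x \<in> I"
  using I unfolding is_ideal_def by blast

lemma is_ideal_mult_right: "x \<in> I \<Longrightarrow> x * r \<in> I"
  using is_ideal_mult_left by (metis mult.commute)

lemma is_ideal_uminus: "x \<in> I \<Longrightarrow> - x \<in> I"
  using is_ideal_mult_left[of x "-1"] by simp

lemma is_ideal_sum: "(\<And>i. i \<in> A \<Longrightarrow> f i \<in> I) \<Longrightarrow> sum f A \<in> I"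
  by (induct A rule: infinite_finite_induct) (auto intro: is_ideal_zero is_ideal_add)

lemma is_ideal_eq_UNIV_iff: "I = UNIV \<longleftrightarrow> 1 \<in> I"
  using is_ideal_mult_right[of 1] by auto

end

lemma ideal_mult_memI:
  fixes k :: nat
  assumes "z = (\<Sum>i<k. X i * Y i)" "\<forall>i<k. X i \<in> I \<and> Y i \<in> J"
  shows "z \<in> ideal_mult I J"
  using assms unfolding ideal_mult_def by blast

lemma ideal_mult_memE:
  assumes "z \<in> ideal_mult I J"
  obtains k :: nat and X Y where "z = (\<Sum>i<k. X i * Y i)" "\<forall>i<k. X i \<in> I \<and> Y i \<in> J"
  using assms unfolding ideal_mult_def by blast

lemma zero_mem_ideal_mult: "0 \<in> ideal_mult I J"
  by (rule ideal_mult_memI[where k = 0]) simp_all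

lemma mult_mem_ideal_mult: "x \<in> I \<Longrightarrow> y \<in> J \<Longrightarrow> x * y \<in> ideal_mult I J"
  by (rule ideal_mult_memI[where k = 1 and X = "\<lambda>_. x" and Y = "\<lambda>_. y"]) simp_all

lemma ideal_mult_add_mult:
  assumes "z \<in> ideal_mult I J" "x \<in> I" "y \<in> J"
  shows "z + x * y \<in> ideal_mult I J"
proof -
  obtain k :: nat and X Y where z: "z = (\<Sum>i<k. X i * Y i)" and XY: "\<forall>i<k. X i \<in> I \<and> Y i \<in> J"
    using assms(1) by (rule ideal_mult_memE)
  show ?thesis
  proof (rule ideal_mult_memI)
    show "z + x * y = (\<Sum>i<Suc k. (X(k := x)) i * (Y(k := y)) i)"
      unfolding z by simp
    show "\<forall>i<Suc k. (X(k := x)) i \<in> I \<and> (Y(k := y)) i \<in> J"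
      using XY assms(2,3) by (simp add: less_Suc_eq)
  qed
qed

lemma ideal_mult_add:
  assumes "z \<in> ideal_mult I J" "z' \<in> ideal_mult I J"
  shows "z + z' \<in> ideal_mult I J"
proof -
  obtain k :: nat and X Y where z': "z' = (\<Sum>i<k. X i * Y i)" and XY: "\<forall>i<k. X i \<in> I \<and> Y i \<in> J"
    using assms(2) by (rule ideal_mult_memE)
  have "z + (\<Sum>i<l. X i * Y i) \<in> ideal_mult I J" if "l \<le> k" for l
    using that
  proof (induction l)
    case 0
    then show ?case using assms(1) by simp
  next
    case (Suc l)
    then show ?case
      using ideal_mult_add_mult[of "z + (\<Sum>i<l. X i * Y i)" I J "X l" "Y l"] XY
      by (simp add: add.assoc)
  qed
  then show ?thesis
    unfolding z' by blast
qed

lemma ideal_mult_mult_left: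
  assumes "is_ideal J" "z \<in> ideal_mult I J"
  shows "r * z \<in> ideal_mult I J"
proof -
  obtain k :: nat and X Y where z: "z = (\<Sum>i<k. X i * Y i)" and XY: "\<forall>i<k. X i \<in> I \<and> Y i \<in> J"
    using assms(2) by (rule ideal_mult_memE)
  show ?thesis
  proof (rule ideal_mult_memI)
    show "r * z = (\<Sum>i<k. X i * (r * Y i))"
      unfolding z by (simp add: sum_distrib_left mult.left_commute)
    show "\<forall>i<k. X i \<in> I \<and> r * Y i \<in> J"
      using XY is_ideal_mult_left[OF assms(1)] by blast
  qed
qed

lemma is_ideal_ideal_mult: "is_ideal J \<Longrightarrow> is_ideal (ideal_mult I J)"
  unfolding is_ideal_def[of "ideal_mult I J"]
  by (blast intro: zero_mem_ideal_mult ideal_mult_add ideal_mult_mult_left)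

lemma ideal_mult_subset: "is_ideal I \<Longrightarrow> ideal_mult I J \<subseteq> I"
  by (auto elim!: ideal_mult_memE intro!: is_ideal_sum is_ideal_mult_right)

lemma ideal_add_memI: "x \<in> I \<Longrightarrow> y \<in> J \<Longrightarrow> x + y \<in> ideal_add I J"
  unfolding ideal_add_def by blast

lemma subset_ideal_add: "0 \<in> J \<Longrightarrow> I \<subseteq> ideal_add I J"
  using ideal_add_memI[of _ I 0 J] by auto

lemma ideal_add_subset: "is_ideal M \<Longrightarrow> I \<subseteq> M \<Longrightarrow> J \<subseteq> M \<Longrightarrow> ideal_add I J \<subseteq> M"
  unfolding ideal_add_def using is_ideal_add by blast

lemma mult_mem_ext_ideal: "a \<in> I \<Longrightarrow> f a * b \<in> ext_ideal f I"
  unfolding ext_ideal_def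
  by (intro CollectI exI[of _ 1] exI[of _ "\<lambda>_. a"] exI[of _ "\<lambda>_. b"]) simp

lemma ext_ideal_subset:
  assumes "is_ideal N" "f ` I \<subseteq> N"
  shows "ext_ideal f I \<subseteq> N"
  unfolding ext_ideal_def using assms by (auto intro!: is_ideal_sum is_ideal_mult_right)

lemma maximal_ideal_is_ideal: "maximal_ideal M \<Longrightarrow> is_ideal M"
  unfolding maximal_ideal_def by blast

lemma maximal_ideal_one_notin: "maximal_ideal M \<Longrightarrow> 1 \<notin> M"
  unfolding maximal_ideal_def using is_ideal_eq_UNIV_iff by blast

lemma is_ideal_add_principal:
  assumes "is_ideal M"
  shows "is_ideal {x + r * c | x r. x \<in> M}"
  unfolding is_ideal_def
proof (intro conjI ballI allI)
  show "0 \<in> {x + r * c | x r. x \<in> M}"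
    using is_ideal_zero[OF assms] by (intro CollectI exI[of _ 0]) auto
next
  fix y z assume "y \<in> {x + r * c | x r. x \<in> M}" "z \<in> {x + r * c | x r. x \<in> M}"
  then obtain x r x' r' where "y = x + r * c" "z = x' + r' * c" "x \<in> M" "x' \<in> M"
    by blast
  then show "y + z \<in> {x + r * c | x r. x \<in> M}"
    using is_ideal_add[OF assms] by (intro CollectI exI[of _ "x + x'"] exI[of _ "r + r'"])
      (auto simp: algebra_simps)
next
  fix y s assume "y \<in> {x + r * c | x r. x \<in> M}"
  then obtain x r where "y = x + r * c" "x \<in> M"
    by blast
  moreover have "s * (x + r * c) = s * x + (s * r) * c"
    by (simp add: algebra_simps)
  ultimately show "s * y \<in> {x + r * c | x r. x \<in> M}"
    using is_ideal_mult_left[OF assms] by blast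
qed

lemma maximal_ideal_inverse:
  fixes M :: "'a::comm_ring_1 set"
  assumes "maximal_ideal M" "c \<notin> M"
  shows "\<exists>b. b * c - 1 \<in> M"
proof -
  have M: "is_ideal M"
    using assms(1) by (rule maximal_ideal_is_ideal)
  define J where "J = {x + r * c | x r. x \<in> M}"
  have "M \<subseteq> J"
    unfolding J_def by (force intro: exI[of _ 0])
  moreover have "c \<in> J"
    unfolding J_def using is_ideal_zero[OF M] by (force intro: exI[of _ 1])
  ultimately have "J = UNIV"
    using assms is_ideal_add_principal[OF M] unfolding maximal_ideal_def J_def by blast
  then obtain x r where "1 = x + r * c" "x \<in> M"
    unfolding J_def by blast
  then have "r * c - 1 \<in> M"
    using is_ideal_uminus[OF M] by (metis add_diff_cancel_right' minus_diff_eq)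
  then show ?thesis ..
qed

lemma is_ideal_Union_chain:
  assumes "C \<noteq> {}" "\<And>J. J \<in> C \<Longrightarrow> is_ideal J" "\<And>J J'. J \<in> C \<Longrightarrow> J' \<in> C \<Longrightarrow> J \<subseteq> J' \<or> J' \<subseteq> J"
  shows "is_ideal (\<Union>C)"
  unfolding is_ideal_def
proof (intro conjI ballI allI)
  show "0 \<in> \<Union>C"
    using assms(1,2) is_ideal_zero by blast
next
  fix x y assume "x \<in> \<Union>C" "y \<in> \<Union>C"
  then obtain J J' where J: "J \<in> C" "J' \<in> C" "x \<in> J" "y \<in> J'"
    by blast
  from assms(3)[OF J(1,2)] show "x + y \<in> \<Union>C"
  proof
    assume "J \<subseteq> J'"
    then show ?thesis using J assms(2) is_ideal_add by blast
  next
    assume "J' \<subseteq> J"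
    then show ?thesis using J assms(2) is_ideal_add by blast
  qed
next
  fix x r assume "x \<in> \<Union>C"
  then show "r * x \<in> \<Union>C"
    using assms(2) is_ideal_mult_left by blast
qed

lemma ideal_subset_maximal_ideal:
  fixes I :: "'a::comm_ring_1 set"
  assumes "is_ideal I" "I \<noteq> UNIV"
  obtains M where "maximal_ideal M" "I \<subseteq> M"
proof -
  define \<A> where "\<A> = {J. is_ideal J \<and> I \<subseteq> J \<and> (1::'a) \<notin> J}"
  have "I \<in> \<A>"
    using assms is_ideal_eq_UNIV_iff unfolding \<A>_def by blast
  moreover have "\<Union>C \<in> \<A>" if "C \<noteq> {}" "subset.chain \<A> C" for C
    using that is_ideal_Union_chain[of C] unfolding \<A>_def subset.chain_def by auto
  ultimately obtain M where M: "M \<in> \<A>" "\<forall>J\<in>\<A>. M \<subseteq> J \<longrightarrow> J = M"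
    using subset_Zorn_nonempty[of \<A>] by blast
  have "maximal_ideal M"
    unfolding maximal_ideal_def
  proof (intro conjI allI impI)
    show "is_ideal M" "M \<noteq> UNIV"
      using M(1) unfolding \<A>_def by auto
  next
    fix J assume "is_ideal J" "M \<subseteq> J"
    then show "J = M \<or> J = UNIV"
      using M is_ideal_eq_UNIV_iff[of J] unfolding \<A>_def by blast
  qed
  moreover have "I \<subseteq> M"
    using M(1) unfolding \<A>_def by blast
  ultimately show thesis ..
qed

lemma local_ring_ideal_subset:
  "local_ring m \<Longrightarrow> is_ideal I \<Longrightarrow> I \<noteq> UNIV \<Longrightarrow> I \<subseteq> m"
  unfolding local_ring_def by (elim ideal_subset_maximal_ideal) auto

lemma ring_hom_additive: "ring_hom f \<Longrightarrow> additive f"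
  unfolding ring_hom_def additive_def by blast

lemma ring_hom_mult: "ring_hom f \<Longrightarrow> f (x * y) = f x * f y"
  unfolding ring_hom_def by blast

lemma ring_hom_one: "ring_hom f \<Longrightarrow> f 1 = 1"
  unfolding ring_hom_def by blast

lemma sum_apply: "(\<Sum>j\<in>J. f j) i = (\<Sum>j\<in>J. f j i)"
  by (induct J rule: infinite_finite_induct) auto

section \<open>Vector spaces over a residue field\<close>

text \<open>The quotient \<open>V/N\<close> as a vector space over the residue field \<open>R/M\<close>, handled through
  representatives: vectors are elements of \<open>V\<close>, scalars are elements of \<open>R\<close>, and
  congruence is modulo \<open>N\<close> and \<open>M\<close> respectively.\<close>
locale residue_space = module scale
  for scale :: "'r::comm_ring_1 \<Rightarrow> 'v::ab_group_add \<Rightarrow> 'v" (infixr \<open>*s\<close> 75) +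
  fixes M :: "'r set" and N V :: "'v set"
  assumes maximal_M: "maximal_ideal M"
    and subspace_N: "subspace N"
    and subspace_V: "subspace V"
    and scale_mem_N: "a \<in> M \<Longrightarrow> x \<in> V \<Longrightarrow> a *s x \<in> N"
begin

lemma M_ideal: "is_ideal M"
  using maximal_M by (rule maximal_ideal_is_ideal)

definition indep :: "'i set \<Rightarrow> ('i \<Rightarrow> 'v) \<Rightarrow> bool" where
  "indep J f \<longleftrightarrow> (\<forall>c. (\<Sum>i\<in>J. c i *s f i) \<in> N \<longrightarrow> (\<forall>i\<in>J. c i \<in> M))"

definition in_span :: "'i set \<Rightarrow> ('i \<Rightarrow> 'v) \<Rightarrow> 'v \<Rightarrow> bool" where
  "in_span J f y \<longleftrightarrow> (\<exists>c. y - (\<Sum>i\<in>J. c i *s f i) \<in> N)"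

lemma indep_cong: "(\<And>i. i \<in> J \<Longrightarrow> f i = g i) \<Longrightarrow> indep J f = indep J g"
  unfolding indep_def by (metis (no_types, lifting) sum.cong)

lemma in_span_cong: "(\<And>i. i \<in> J \<Longrightarrow> f i = g i) \<Longrightarrow> in_span J f y = in_span J g y"
  unfolding in_span_def by (metis (no_types, lifting) sum.cong)

lemma in_span_if_mem_N: "y \<in> N \<Longrightarrow> in_span J f y"
  unfolding in_span_def by (intro exI[of _ "\<lambda>_. 0"]) simp

lemma in_span_empty_iff: "in_span {} f y \<longleftrightarrow> y \<in> N"
  unfolding in_span_def by simp

lemma in_span_if_diff_mem_N:
  assumes "x - y \<in> N" "in_span J f y"
  shows "in_span J f x"
proof -
  obtain c where "y - (\<Sum>i\<in>J. c i *s f i) \<in> N"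
    using assms(2) unfolding in_span_def by blast
  then have "(x - y) + (y - (\<Sum>i\<in>J. c i *s f i)) \<in> N"
    using assms(1) subspace_N subspace_add by blast
  then show ?thesis
    unfolding in_span_def by auto
qed

lemma in_span_add:
  assumes "in_span J f x" "in_span J f y"
  shows "in_span J f (x + y)"
proof -
  obtain c d where "x - (\<Sum>i\<in>J. c i *s f i) \<in> N" "y - (\<Sum>i\<in>J. d i *s f i) \<in> N"
    using assms unfolding in_span_def by blast
  then have "(x - (\<Sum>i\<in>J. c i *s f i)) + (y - (\<Sum>i\<in>J. d i *s f i)) \<in> N"
    using subspace_N subspace_add by blast
  moreover have "(x - (\<Sum>i\<in>J. c i *s f i)) + (y - (\<Sum>i\<in>J. d i *s f i))
      = x + y - (\<Sum>i\<in>J. (c i + d i) *s f i)"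
    by (simp add: scale_left_distrib sum.distrib)
  ultimately show ?thesis
    unfolding in_span_def by metis
qed

lemma in_span_scale:
  assumes "in_span J f x"
  shows "in_span J f (a *s x)"
proof -
  obtain c where "x - (\<Sum>i\<in>J. c i *s f i) \<in> N"
    using assms unfolding in_span_def by blast
  then have "a *s (x - (\<Sum>i\<in>J. c i *s f i)) \<in> N"
    using subspace_N subspace_scale by blast
  moreover have "a *s (x - (\<Sum>i\<in>J. c i *s f i)) = a *s x - (\<Sum>i\<in>J. (a * c i) *s f i)"
    by (simp add: scale_right_diff_distrib scale_sum_right)
  ultimately show ?thesis
    unfolding in_span_def by metis
qed

lemma in_span_diff: "in_span J f x \<Longrightarrow> in_span J f y \<Longrightarrow> in_span J f (x - y)"
  using in_span_add[of J f x "- y"] in_span_scale[of J f y "- 1"] by simp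

lemma in_span_sum: "(\<And>k. k \<in> K \<Longrightarrow> in_span J f (g k)) \<Longrightarrow> in_span J f (sum g K)"
  by (induct K rule: infinite_finite_induct)
    (auto intro: in_span_if_mem_N subspace_0[OF subspace_N] in_span_add)

lemma sum_scale_indicator:
  "finite J \<Longrightarrow> j \<in> J \<Longrightarrow> (\<Sum>i\<in>J. (if i = j then a else 0) *s f i) = a *s f j"
  by (simp add: if_distrib[of "\<lambda>c. c *s _"] cong: if_cong)

lemma in_span_member: "finite J \<Longrightarrow> j \<in> J \<Longrightarrow> in_span J f (f j)"
  unfolding in_span_def
  by (intro exI[of _ "\<lambda>i. if i = j then 1 else 0"]) (simp add: sum_scale_indicator subspace_0[OF subspace_N])

lemma in_span_trans:
  assumes "in_span K u y" "\<And>k. k \<in> K \<Longrightarrow> in_span J f (u k)"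
  shows "in_span J f y"
proof -
  obtain c where "y - (\<Sum>k\<in>K. c k *s u k) \<in> N"
    using assms(1) unfolding in_span_def by blast
  moreover have "in_span J f (\<Sum>k\<in>K. c k *s u k)"
    by (intro in_span_sum in_span_scale assms(2))
  ultimately show ?thesis
    by (rule in_span_if_diff_mem_N)
qed

lemma in_span_mono: "finite J' \<Longrightarrow> J \<subseteq> J' \<Longrightarrow> in_span J f y \<Longrightarrow> in_span J' f y"
  by (erule in_span_trans) (auto intro: in_span_member)

lemma in_span_insert_iff:
  assumes "finite K" "k \<notin> K"
  shows "in_span (insert k K) u y \<longleftrightarrow> (\<exists>a. in_span K u (y - a *s u k))"
proof
  assume "in_span (insert k K) u y"
  then obtain c where "y - (\<Sum>i\<in>insert k K. c i *s u i) \<in> N"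
    unfolding in_span_def by blast
  then have "y - c k *s u k - (\<Sum>i\<in>K. c i *s u i) \<in> N"
    using assms by (simp add: diff_diff_eq)
  then show "\<exists>a. in_span K u (y - a *s u k)"
    unfolding in_span_def by blast
next
  assume "\<exists>a. in_span K u (y - a *s u k)"
  then obtain a c where "y - a *s u k - (\<Sum>i\<in>K. c i *s u i) \<in> N"
    unfolding in_span_def by blast
  moreover have "(\<Sum>i\<in>K. (c(k := a)) i *s u i) = (\<Sum>i\<in>K. c i *s u i)"
    using assms(2) by (intro sum.cong) auto
  ultimately have "y - (\<Sum>i\<in>insert k K. (c(k := a)) i *s u i) \<in> N"
    using assms by (simp add: diff_diff_eq)
  then show "in_span (insert k K) u y"
    unfolding in_span_def by blast
qed

lemma indep_member_notin_N:
  assumes "finite J" "indep J f" "j \<in> J"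
  shows "f j \<notin> N"
proof
  assume "f j \<in> N"
  then have "(\<Sum>i\<in>J. (if i = j then 1 else 0) *s f i) \<in> N"
    using assms(1,3) by (simp add: sum_scale_indicator)
  then have "(1::'r) \<in> M"
    using assms(2,3) unfolding indep_def by fastforce
  then show False
    using maximal_M maximal_ideal_one_notin by blast
qed

lemma indep_subtract_multiple:
  assumes "finite J" "indep J f" "j \<in> J"
  shows "indep (J - {j}) (\<lambda>i. f i - t i *s f j)"
  unfolding indep_def
proof (intro allI impI)
  fix c assume c: "(\<Sum>i\<in>J - {j}. c i *s (f i - t i *s f j)) \<in> N"
  define c' where "c' = c(j := - (\<Sum>i\<in>J - {j}. c i * t i))"
  have "(\<Sum>i\<in>J. c' i *s f i) = c' j *s f j + (\<Sum>i\<in>J - {j}. c' i *s f i)"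
    using assms(1,3) by (simp add: sum.remove)
  also have "\<dots> = (\<Sum>i\<in>J - {j}. c i *s (f i - t i *s f j))"
    by (simp add: c'_def scale_right_diff_distrib sum_subtractf scale_sum_left)
  finally have "\<forall>i\<in>J. c' i \<in> M"
    using c assms(2) unfolding indep_def by metis
  then show "\<forall>i\<in>J - {j}. c i \<in> M"
    unfolding c'_def by (metis DiffE fun_upd_other singletonI)
qed

lemma indep_image_iff:
  assumes "inj_on g J"
  shows "indep (g ` J) f \<longleftrightarrow> indep J (f \<circ> g)"
proof -
  have sum_image: "(\<Sum>i\<in>g ` J. c i *s f i) = (\<Sum>j\<in>J. c (g j) *s (f \<circ> g) j)" for c
    using assms by (simp add: sum.reindex)
  show ?thesis
  proof
    assume indep_image: "indep (g ` J) f"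
    show "indep J (f \<circ> g)"
      unfolding indep_def
    proof (intro allI impI)
      fix c assume "(\<Sum>j\<in>J. c j *s (f \<circ> g) j) \<in> N"
      moreover have "(\<Sum>j\<in>J. c (inv_into J g (g j)) *s (f \<circ> g) j) = (\<Sum>j\<in>J. c j *s (f \<circ> g) j)"
        using assms by (intro sum.cong) auto
      ultimately have "\<forall>i\<in>g ` J. c (inv_into J g i) \<in> M"
        using indep_image sum_image[of "\<lambda>i. c (inv_into J g i)"] unfolding indep_def by metis
      then show "\<forall>j\<in>J. c j \<in> M"
        using assms by auto
    qed
  next
    assume "indep J (f \<circ> g)"
    then show "indep (g ` J) f"
      unfolding indep_def sum_image by auto
  qed
qed

lemma indep_subset:
  assumes "finite J'" "J \<subseteq> J'" "indep J' f"
  shows "indep J f"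
  unfolding indep_def
proof (intro allI impI)
  fix c assume c: "(\<Sum>i\<in>J. c i *s f i) \<in> N"
  define c' where "c' i = (if i \<in> J then c i else 0)" for i
  have "(\<Sum>i\<in>J'. c' i *s f i) = (\<Sum>i\<in>J'. if i \<in> J then c i *s f i else 0)"
    unfolding c'_def by (rule sum.cong) auto
  also have "\<dots> = (\<Sum>i\<in>J. c i *s f i)"
    using sum.inter_restrict[OF assms(1), of "\<lambda>i. c i *s f i" J] assms(2) by (simp add: Int_absorb1)
  finally have "\<forall>i\<in>J'. c' i \<in> M"
    using c assms(3) unfolding indep_def by metis
  then show "\<forall>i\<in>J. c i \<in> M"
    using assms(2) unfolding c'_def by (metis subsetD)
qed

lemma indep_if_diff_mem_N:
  assumes "\<And>i. i \<in> J \<Longrightarrow> f i - g i \<in> N" "indep J g"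
  shows "indep J f"
  unfolding indep_def
proof (intro allI impI)
  fix c assume c: "(\<Sum>i\<in>J. c i *s f i) \<in> N"
  have "(\<Sum>i\<in>J. c i *s (f i - g i)) \<in> N"
    using assms(1) subspace_N by (intro subspace_sum subspace_scale) auto
  with c have "(\<Sum>i\<in>J. c i *s f i) - (\<Sum>i\<in>J. c i *s (f i - g i)) \<in> N"
    using subspace_N subspace_diff by blast
  then have "(\<Sum>i\<in>J. c i *s g i) \<in> N"
    by (simp add: scale_right_diff_distrib sum_subtractf)
  then show "\<forall>i\<in>J. c i \<in> M"
    using assms(2) unfolding indep_def by blast
qed

lemma in_span_remove_if_dependent:
  assumes "finite J" "j \<in> J" "(\<Sum>i\<in>J. c i *s f i) \<in> N" "c j \<notin> M" "f j \<in> V"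
  shows "in_span (J - {j}) f (f j)"
proof -
  obtain b where b: "b * c j - 1 \<in> M"
    using maximal_ideal_inverse[OF maximal_M assms(4)] by blast
  have "(\<Sum>i\<in>J. c i *s f i) = c j *s f j + (\<Sum>i\<in>J - {j}. c i *s f i)"
    using assms(1,2) by (simp add: sum.remove)
  then have "f j - (\<Sum>i\<in>J - {j}. (- (b * c i)) *s f i)
      = b *s (\<Sum>i\<in>J. c i *s f i) - (b * c j - 1) *s f j"
    by (simp add: algebra_simps scale_sum_right sum_negf)
  also have "\<dots> \<in> N"
    using assms(3,5) b subspace_N subspace_V subspace_diff subspace_scale scale_mem_N by blast
  finally show ?thesis
    unfolding in_span_def by (rule exI[of _ "\<lambda>i. - (b * c i)"])
qed

lemma not_indep_imp_in_span_remove: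
  assumes "finite J" "f ` J \<subseteq> V" "\<not> indep J f"
  obtains j where "j \<in> J" "in_span (J - {j}) f (f j)"
proof -
  obtain c j where "(\<Sum>i\<in>J. c i *s f i) \<in> N" "j \<in> J" "c j \<notin> M"
    using assms(3) unfolding indep_def by blast
  then show thesis
    using that in_span_remove_if_dependent[OF assms(1)] assms(2) by blast
qed

lemma indep_insert:
  assumes "finite J" "j \<notin> J" "indep J f" "f j \<in> V" "\<not> in_span J f (f j)"
  shows "indep (insert j J) f"
  unfolding indep_def
proof (intro allI impI)
  fix c assume c: "(\<Sum>i\<in>insert j J. c i *s f i) \<in> N"
  have cj: "c j \<in> M"
    using in_span_remove_if_dependent[of "insert j J" j c f] assms c by auto
  have "(\<Sum>i\<in>J. c i *s f i) = (\<Sum>i\<in>insert j J. c i *s f i) - c j *s f j"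
    using assms(1,2) by simp
  also have "\<dots> \<in> N"
    using c cj assms(4) scale_mem_N subspace_N subspace_diff by blast
  finally show "\<forall>i\<in>insert j J. c i \<in> M"
    using cj assms(3) unfolding indep_def by blast
qed

lemma in_span_eliminate:
  assumes "b * \<beta> - 1 \<in> M" "v \<in> V" "in_span K u (x - \<alpha> *s v)" "in_span K u (y - \<beta> *s v)"
  shows "in_span K u (x - (\<alpha> * b) *s y)"
proof (rule in_span_if_diff_mem_N)
  text \<open>The coefficient of \<open>v\<close> vanishes modulo \<open>M\<close>, because \<open>b\<close> inverts \<open>\<beta>\<close>.\<close>
  have "x - (\<alpha> * b) *s y - ((x - \<alpha> *s v) - (\<alpha> * b) *s (y - \<beta> *s v)) = (- (\<alpha> * (b * \<beta> - 1))) *s v"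
    by (simp add: algebra_simps)
  moreover have "- (\<alpha> * (b * \<beta> - 1)) \<in> M"
    using assms(1) by (intro is_ideal_uminus[OF M_ideal] is_ideal_mult_left[OF M_ideal])
  ultimately show "x - (\<alpha> * b) *s y - ((x - \<alpha> *s v) - (\<alpha> * b) *s (y - \<beta> *s v)) \<in> N"
    using scale_mem_N[OF _ assms(2)] by (simp only:)
  show "in_span K u ((x - \<alpha> *s v) - (\<alpha> * b) *s (y - \<beta> *s v))"
    using assms(3,4) by (blast intro: in_span_diff in_span_scale)
qed

theorem indep_card_le_card_spanning:
  assumes "finite K" "u ` K \<subseteq> V" "finite J" "indep J f" "f ` J \<subseteq> V"
    and "\<forall>i\<in>J. in_span K u (f i)"
  shows "card J \<le> card K"
  using assms
proof (induction K arbitrary: J f rule: finite_induct)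
  case empty
  then have "J = {}"
    using indep_member_notin_N[of J f] by (auto simp: in_span_empty_iff)
  then show ?case
    by simp
next
  case (insert k K)
  have "\<forall>i\<in>J. \<exists>a. in_span K u (f i - a *s u k)"
    using insert.prems(5) in_span_insert_iff[OF insert.hyps(1,2)] by blast
  from bchoice[OF this] obtain a where a: "\<forall>i\<in>J. in_span K u (f i - a i *s u k)" ..
  have uk: "u k \<in> V" and uK: "u ` K \<subseteq> V"
    using insert.prems(1) by auto
  show ?case
  proof (cases "\<forall>i\<in>J. a i \<in> M")
    case True
    have "in_span K u (f i)" if "i \<in> J" for i
      using in_span_if_diff_mem_N[OF _ a[rule_format, OF that]] scale_mem_N[OF _ uk] True that
      by simp
    then have "card J \<le> card K"
      using insert.IH[OF uK insert.prems(2-4)] by blast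
    then show ?thesis
      using insert.hyps by simp
  next
    case False
    then obtain j where j: "j \<in> J" "a j \<notin> M"
      by blast
    obtain b where b: "b * a j - 1 \<in> M"
      using maximal_ideal_inverse[OF maximal_M j(2)] by blast
    define g where "g i = f i - (a i * b) *s f j" for i
    have g_indep: "indep (J - {j}) g"
      unfolding g_def using indep_subtract_multiple[OF insert.prems(2,3) j(1)] .
    have g_V: "g ` (J - {j}) \<subseteq> V"
      using insert.prems(4) j(1) unfolding g_def
      by (auto intro!: subspace_diff[OF subspace_V] subspace_scale[OF subspace_V])
    have "in_span K u (g i)" if "i \<in> J - {j}" for i
      unfolding g_def using b uk a that j(1) by (intro in_span_eliminate) auto
    then have "card (J - {j}) \<le> card K"
      using insert.IH[OF uK _ g_indep g_V] insert.prems(2) by blast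
    then show ?thesis
      using insert.hyps insert.prems(2) j(1) by (simp add: card_Diff_singleton_if)
  qed
qed

lemma indep_extend:
  assumes "finite G" "finite J\<^sub>0" "indep J\<^sub>0 f" "f ` (J\<^sub>0 \<union> G) \<subseteq> V"
  obtains J where "J\<^sub>0 \<subseteq> J" "J \<subseteq> J\<^sub>0 \<union> G" "indep J f" "\<forall>g\<in>G. in_span J f (f g)"
proof -
  have "\<exists>J. J\<^sub>0 \<subseteq> J \<and> J \<subseteq> J\<^sub>0 \<union> G \<and> indep J f \<and> (\<forall>g\<in>G. in_span J f (f g))"
    using assms(1,4)
  proof (induction G rule: finite_induct)
    case empty
    then show ?case using assms(3) by blast
  next
    case (insert g G)
    then obtain J where J: "J\<^sub>0 \<subseteq> J" "J \<subseteq> J\<^sub>0 \<union> G" "indep J f" "\<forall>g\<in>G. in_span J f (f g)"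
      by auto
    have "finite J"
      using J(2) assms(2) insert.hyps(1) finite_subset by blast
    show ?case
    proof (cases "in_span J f (f g)")
      case True
      then show ?thesis using J by blast
    next
      case False
      then have "g \<notin> J"
        using in_span_member[OF \<open>finite J\<close>] by blast
      then have "indep (insert g J) f"
        using indep_insert[OF \<open>finite J\<close> _ J(3) _ False] insert.prems by auto
      moreover have "\<forall>h\<in>insert g G. in_span (insert g J) f (f h)"
        using J(4) in_span_mono[of "insert g J" J f] in_span_member[of "insert g J" g f] \<open>finite J\<close>
        by auto
      ultimately show ?thesis
        using J by (intro exI[of _ "insert g J"]) auto
    qed
  qed
  then show thesis
    using that by blast
qed

definition indep_sizes :: "'v set \<Rightarrow> nat set" where
  "indep_sizes S = {k. \<exists>v. (\<forall>i<k. v i \<in> S) \<and> indep {..<k} v}"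

definition dim :: "'v set \<Rightarrow> nat" where
  "dim S = Sup (indep_sizes S)"

lemma zero_mem_indep_sizes: "0 \<in> indep_sizes S"
  unfolding indep_sizes_def indep_def by simp

lemma card_mem_indep_sizes:
  assumes "finite J" "indep J f" "f ` J \<subseteq> S"
  shows "card J \<in> indep_sizes S"
proof -
  obtain h where h: "bij_betw h {..<card J} J"
    using ex_bij_betw_nat_finite[OF assms(1)] atLeast0LessThan by metis
  then have "indep {..<card J} (f \<circ> h)"
    using assms(2) indep_image_iff[of h "{..<card J}" f] by (simp add: bij_betw_def)
  moreover have "\<forall>i<card J. (f \<circ> h) i \<in> S"
    using bij_betw_apply[OF h] assms(3) by auto
  ultimately show ?thesis
    unfolding indep_sizes_def by blast
qed

lemma indep_sizes_le_card_spanning: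
  assumes "finite K" "u ` K \<subseteq> V" "S \<subseteq> V" "\<forall>y\<in>S. in_span K u y" "k \<in> indep_sizes S"
  shows "k \<le> card K"
proof -
  obtain v where "\<forall>i<k. v i \<in> S" "indep {..<k} v"
    using assms(5) unfolding indep_sizes_def by blast
  then have "card {..<k} \<le> card K"
    using assms(1-4) by (intro indep_card_le_card_spanning) auto
  then show ?thesis
    by simp
qed

lemma bdd_above_indep_sizes_if_spanned:
  assumes "finite K" "u ` K \<subseteq> V" "S \<subseteq> V" "\<forall>y\<in>S. in_span K u y"
  shows "bdd_above (indep_sizes S)"
  using indep_sizes_le_card_spanning[OF assms] by (intro bdd_aboveI) blast

lemma dim_le_card_spanning:
  assumes "finite K" "u ` K \<subseteq> V" "S \<subseteq> V" "\<forall>y\<in>S. in_span K u y"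
  shows "dim S \<le> card K"
  unfolding dim_def using indep_sizes_le_card_spanning[OF assms] zero_mem_indep_sizes
  by (intro cSup_least) blast+

lemma card_le_dim:
  assumes "bdd_above (indep_sizes S)" "finite J" "indep J f" "f ` J \<subseteq> S"
  shows "card J \<le> dim S"
  unfolding dim_def using card_mem_indep_sizes[OF assms(2-4)] assms(1) by (rule cSup_upper)

lemma dim_mem_indep_sizes: "bdd_above (indep_sizes S) \<Longrightarrow> dim S \<in> indep_sizes S"
  unfolding dim_def bdd_above_nat using zero_mem_indep_sizes
  by (metis Max_in cSup_eq_Max empty_iff)

text \<open>An independent family of maximal size spans.\<close>
lemma exists_basis:
  assumes "bdd_above (indep_sizes S)" "S \<subseteq> V"
  obtains u where "\<forall>i<dim S. u i \<in> S" "indep {..<dim S} u" "\<forall>y\<in>S. in_span {..<dim S} u y"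
proof -
  let ?e = "dim S"
  obtain u where u: "\<forall>i<?e. u i \<in> S" "indep {..<?e} u"
    using dim_mem_indep_sizes[OF assms(1)] unfolding indep_sizes_def by blast
  have "in_span {..<?e} u y" if "y \<in> S" for y
  proof (rule ccontr)
    assume y: "\<not> in_span {..<?e} u y"
    have "indep {..<?e} (u(?e := y)) = indep {..<?e} u"
      by (rule indep_cong) simp
    moreover have "in_span {..<?e} (u(?e := y)) y = in_span {..<?e} u y"
      by (rule in_span_cong) simp
    ultimately have "indep {..<?e} (u(?e := y))" "\<not> in_span {..<?e} (u(?e := y)) y"
      using u(2) y by simp_all
    then have "indep (insert ?e {..<?e}) (u(?e := y))"
      using that assms(2) by (intro indep_insert) auto
    moreover have "(u(?e := y)) ` insert ?e {..<?e} \<subseteq> S"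
      using u(1) that by auto
    ultimately have "card (insert ?e {..<?e}) \<le> ?e"
      using card_le_dim[OF assms(1)] by blast
    then show False
      by simp
  qed
  then show thesis
    using that u by blast
qed

end

section \<open>Cotangent spaces and coordinate spaces\<close>

lemma module_mult: "module ((*) :: 'a::comm_ring_1 \<Rightarrow> 'a \<Rightarrow> 'a)"
  by unfold_locales (simp_all add: algebra_simps)

lemma subspace_mult_iff_is_ideal: "module.subspace (*) I \<longleftrightarrow> is_ideal I"
  unfolding module.subspace_def[OF module_mult] is_ideal_def by blast

locale cotangent =
  fixes M :: "'a::comm_ring_1 set"
  assumes maximal: "maximal_ideal M"

sublocale cotangent \<subseteq> residue_space "(*)" M "ideal_mult M M" M
proof (intro residue_space.intro residue_space_axioms.intro module_mult)
  have "is_ideal M"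
    using maximal by (rule maximal_ideal_is_ideal)
  then show "module.subspace (*) (ideal_mult M M)" "module.subspace (*) M"
    by (simp_all add: subspace_mult_iff_is_ideal is_ideal_ideal_mult)
qed (simp_all add: maximal mult_mem_ideal_mult)

context cotangent
begin

lemma dim_mod_eq_dim: "dim_mod M (ideal_mult M M) S = dim S"
  unfolding dim_mod_def dim_def indep_sizes_def indep_def indep_mod_def by (simp add: Ball_def)

lemma bdd_above_indep_sizes_if_noetherian:
  assumes "noetherian TYPE('a)" "S \<subseteq> M"
  shows "bdd_above (indep_sizes S)"
proof -
  obtain F where F: "finite F" "F \<subseteq> M" "M = ideal_gen F"
    using assms(1) M_ideal unfolding noetherian_def by blast
  have "in_span F id y" if y: "y \<in> M" for y
  proof -
    obtain c where "y = (\<Sum>x\<in>F. c x * x)"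
      using y F(3) unfolding ideal_gen_def by blast
    then show ?thesis
      unfolding in_span_def by (intro exI[of _ c]) (simp add: zero_mem_ideal_mult)
  qed
  then show ?thesis
    using F(1,2) assms(2) by (intro bdd_above_indep_sizes_if_spanned[of F id]) auto
qed

lemma exists_cotangent_basis:
  assumes "noetherian TYPE('a)"
  shows "\<exists>d x. cotangent_basis M d x"
proof -
  obtain x where "\<forall>i<dim M. x i \<in> M" "indep {..<dim M} x" "\<forall>y\<in>M. in_span {..<dim M} x y"
    using exists_basis[OF bdd_above_indep_sizes_if_noetherian[OF assms order_refl] order_refl] .
  then have "cotangent_basis M (dim M) x"
    unfolding cotangent_basis_def indep_mod_def indep_def in_span_def by (simp add: lessThan_def)
  then show ?thesis
    by blast
qed

end

text \<open>The coordinate space \<open>(R/M)\<^sup>d\<close>; a vector is a sequence whose entries at positions \<open>\<ge> d\<close>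
  are ignored.\<close>
locale coordinate_space =
  fixes M :: "'a::comm_ring_1 set" and d :: nat
  assumes maximal: "maximal_ideal M"

lemma module_pointwise: "module (\<lambda>(c::'a::comm_ring_1) (w::'i \<Rightarrow> 'a) i. c * w i)"
  by unfold_locales (simp_all add: algebra_simps fun_eq_iff)

sublocale coordinate_space \<subseteq> residue_space "\<lambda>c w i. c * w i" M "{w. \<forall>i<d. w i \<in> M}" UNIV
proof (intro residue_space.intro residue_space_axioms.intro module_pointwise maximal)
  have M: "is_ideal M"
    using maximal by (rule maximal_ideal_is_ideal)
  show "module.subspace (\<lambda>c w i. c * w i) {w. \<forall>i<d. w i \<in> M}"
    unfolding module.subspace_def[OF module_pointwise]
    using is_ideal_zero[OF M] is_ideal_add[OF M] is_ideal_mult_left[OF M] by auto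
  show "module.subspace (\<lambda>c w i. c * w i) UNIV"
    unfolding module.subspace_def[OF module_pointwise] by simp
  show "(\<lambda>i. a * x i) \<in> {w. \<forall>i<d. w i \<in> M}" if "a \<in> M" for a and x :: "nat \<Rightarrow> 'a"
    using that is_ideal_mult_right[OF M] by simp
qed

context coordinate_space
begin

lemma indep_iff: "indep J f \<longleftrightarrow> (\<forall>c. (\<forall>i<d. (\<Sum>j\<in>J. c j * f j i) \<in> M) \<longrightarrow> (\<forall>j\<in>J. c j \<in> M))"
  by (simp add: indep_def sum_apply)

lemma in_span_iff: "in_span J f y \<longleftrightarrow> (\<exists>c. \<forall>i<d. y i - (\<Sum>j\<in>J. c j * f j i) \<in> M)"
  by (simp add: in_span_def sum_apply)

definition unit_vec :: "nat \<Rightarrow> nat \<Rightarrow> 'a" where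
  "unit_vec p = (\<lambda>i. if i = p then 1 else 0)"

lemma sum_unit_vec: "i < d \<Longrightarrow> (\<Sum>p<d. c p * unit_vec p i) = c i"
  by (simp add: unit_vec_def if_distrib[of "(*) _"] cong: if_cong)

lemma in_span_unit_vec: "in_span {..<d} unit_vec w"
  unfolding in_span_iff using sum_unit_vec is_ideal_zero[OF M_ideal] by (intro exI[of _ w]) simp

lemma indep_unit_vec: "indep {..<d} unit_vec"
  unfolding indep_iff using sum_unit_vec by auto

lemma bdd_above_indep_sizes: "bdd_above (indep_sizes S)"
  using in_span_unit_vec by (intro bdd_above_indep_sizes_if_spanned[of "{..<d}" unit_vec]) auto

lemma indep_if_spanning:
  assumes "finite K" "card K \<le> d" "\<forall>p<d. in_span K f (unit_vec p)"
  shows "indep K f"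
proof (rule ccontr)
  assume "\<not> indep K f"
  then obtain k where k: "k \<in> K" "in_span (K - {k}) f (f k)"
    using not_indep_imp_in_span_remove[OF assms(1)] by blast
  have "in_span (K - {k}) f (f j)" if "j \<in> K" for j
    using k that assms(1) in_span_member[of "K - {k}" j f] by (cases "j = k") auto
  then have "\<forall>p\<in>{..<d}. in_span (K - {k}) f (unit_vec p)"
    using assms(3) in_span_trans by blast
  then have "card {..<d} \<le> card (K - {k})"
    using assms(1) indep_unit_vec by (intro indep_card_le_card_spanning) auto
  moreover have "card K > 0"
    using assms(1) k(1) card_gt_0_iff by blast
  ultimately show False
    using assms(1,2) k(1) by (simp add: card_Diff_singleton_if)
qed

end

section \<open>Local homomorphisms\<close>

locale local_hom =
  fixes \<phi> :: "'a::comm_ring_1 \<Rightarrow> 'b::comm_ring_1" and m :: "'a set" and n :: "'b set"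
  assumes hom: "ring_hom \<phi>"
    and maximal_m: "maximal_ideal m" and maximal_n: "maximal_ideal n"
    and image_m: "\<phi> ` m \<subseteq> n"

sublocale local_hom \<subseteq> A: cotangent m
  by (rule cotangent.intro[OF maximal_m])

sublocale local_hom \<subseteq> B: cotangent n
  by (rule cotangent.intro[OF maximal_n])

sublocale local_hom \<subseteq> \<phi>: additive \<phi>
  by (rule ring_hom_additive[OF hom])

context local_hom
begin

lemma phi_mult: "\<phi> (x * y) = \<phi> x * \<phi> y"
  using hom by (rule ring_hom_mult)

lemma phi_mem_n: "x \<in> m \<Longrightarrow> \<phi> x \<in> n"
  using image_m by blast

lemma phi_mem_ideal_mult:
  assumes "x \<in> ideal_mult m m"
  shows "\<phi> x \<in> ideal_mult n n"
proof -
  obtain k :: nat and X Y where x: "x = (\<Sum>i<k. X i * Y i)" and XY: "\<forall>i<k. X i \<in> m \<and> Y i \<in> m"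
    using assms by (rule ideal_mult_memE)
  show ?thesis
  proof (rule ideal_mult_memI)
    show "\<phi> x = (\<Sum>i<k. \<phi> (X i) * \<phi> (Y i))"
      unfolding x by (simp add: \<phi>.sum phi_mult)
    show "\<forall>i<k. \<phi> (X i) \<in> n \<and> \<phi> (Y i) \<in> n"
      using XY phi_mem_n by blast
  qed
qed

lemma phi_mem_ideal_add_ext_ideal:
  assumes "y \<in> ideal_add I (ideal_mult m m)"
  shows "\<phi> y \<in> ideal_add (ext_ideal \<phi> I) (ideal_mult n n)"
proof -
  obtain a q where aq: "y = a + q" "a \<in> I" "q \<in> ideal_mult m m"
    using assms unfolding ideal_add_def by blast
  have "\<phi> a * 1 + \<phi> q \<in> ideal_add (ext_ideal \<phi> I) (ideal_mult n n)"
    using aq(2,3) by (intro ideal_add_memI mult_mem_ext_ideal phi_mem_ideal_mult)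
  then show ?thesis
    unfolding aq(1) by (simp add: \<phi>.add)
qed

lemma in_span_image:
  assumes "A.in_span J f y"
  shows "B.in_span J (\<lambda>j. \<phi> (f j)) (\<phi> y)"
proof -
  obtain c where "y - (\<Sum>j\<in>J. c j * f j) \<in> ideal_mult m m"
    using assms unfolding A.in_span_def by blast
  then have "\<phi> (y - (\<Sum>j\<in>J. c j * f j)) \<in> ideal_mult n n"
    by (rule phi_mem_ideal_mult)
  then have "\<phi> y - (\<Sum>j\<in>J. \<phi> (c j) * \<phi> (f j)) \<in> ideal_mult n n"
    by (simp add: \<phi>.diff \<phi>.sum phi_mult)
  then show ?thesis
    unfolding B.in_span_def by (intro exI[of _ "\<lambda>j. \<phi> (c j)"])
qed

lemma in_span_image_ext_ideal:
  assumes "\<forall>a\<in>I. A.in_span K u a" "y \<in> ideal_add (ext_ideal \<phi> I) (ideal_mult n n)"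
  shows "B.in_span K (\<lambda>k. \<phi> (u k)) y"
proof -
  obtain s q where y: "y = s + q" "s \<in> ext_ideal \<phi> I" "q \<in> ideal_mult n n"
    using assms(2) unfolding ideal_add_def by blast
  obtain k :: nat and a b where s: "s = (\<Sum>i<k. \<phi> (a i) * b i)" "\<forall>i<k. a i \<in> I"
    using y(2) unfolding ext_ideal_def by blast
  have "B.in_span K (\<lambda>k. \<phi> (u k)) (\<phi> (a i) * b i)" if "i < k" for i
  proof -
    have "A.in_span K u (a i)"
      using assms(1) s(2) that by blast
    from B.in_span_scale[OF in_span_image[OF this], of "b i"] show ?thesis
      by (simp add: mult.commute)
  qed
  then have "B.in_span K (\<lambda>k. \<phi> (u k)) s"
    unfolding s(1) by (intro B.in_span_sum) simp
  then show ?thesis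
    unfolding y(1) using B.in_span_if_mem_N[OF y(3)] by (rule B.in_span_add)
qed

theorem dim_ext_ideal_le:
  assumes "I \<subseteq> m" and bdd: "bdd_above (A.indep_sizes (ideal_add I (ideal_mult m m)))"
  shows "bdd_above (B.indep_sizes (ideal_add (ext_ideal \<phi> I) (ideal_mult n n)))"
    and "B.dim (ideal_add (ext_ideal \<phi> I) (ideal_mult n n)) \<le> A.dim (ideal_add I (ideal_mult m m))"
proof -
  let ?SA = "ideal_add I (ideal_mult m m)" and ?SB = "ideal_add (ext_ideal \<phi> I) (ideal_mult n n)"
  have SA: "?SA \<subseteq> m"
    using assms(1) ideal_mult_subset[OF A.M_ideal] by (rule ideal_add_subset[OF A.M_ideal])
  have "\<phi> ` I \<subseteq> n"
    using assms(1) image_m by blast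
  then have SB: "?SB \<subseteq> n"
    using ideal_mult_subset[OF B.M_ideal] by (intro ideal_add_subset ext_ideal_subset B.M_ideal)
  obtain u where u: "\<forall>i<A.dim ?SA. u i \<in> ?SA" "\<forall>y\<in>?SA. A.in_span {..<A.dim ?SA} u y"
    using A.exists_basis[OF bdd SA] by blast
  have "\<forall>a\<in>I. A.in_span {..<A.dim ?SA} u a"
    using u(2) subset_ideal_add[OF zero_mem_ideal_mult] by blast
  then have span: "\<forall>y\<in>?SB. B.in_span {..<A.dim ?SA} (\<lambda>k. \<phi> (u k)) y"
    using in_span_image_ext_ideal by blast
  have image: "(\<lambda>k. \<phi> (u k)) ` {..<A.dim ?SA} \<subseteq> n"
    using u(1) SA phi_mem_n by auto
  show "bdd_above (B.indep_sizes ?SB)"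
    using B.bdd_above_indep_sizes_if_spanned[OF finite_lessThan image SB span] .
  show "B.dim ?SB \<le> A.dim ?SA"
    using B.dim_le_card_spanning[OF finite_lessThan image SB span] by simp
qed

lemma rd_eq_rd_wrt:
  assumes "noetherian TYPE('a)"
  obtains d x where "cotangent_basis m d x" "rd \<phi> m n = rd_wrt \<phi> n d x"
proof -
  define p where "p = (SOME p. cotangent_basis m (fst p) (snd p))"
  have "\<exists>p. cotangent_basis m (fst p) (snd p)"
    using A.exists_cotangent_basis[OF assms] by auto
  then have "cotangent_basis m (fst p) (snd p)"
    unfolding p_def by (rule someI_ex)
  moreover have "rd \<phi> m n = rd_wrt \<phi> n (fst p) (snd p)"
    unfolding rd_def p_def[symmetric] by (simp add: case_prod_beta)
  ultimately show thesis
    by (rule that)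
qed

end

locale local_hom_coords = local_hom +
  fixes d :: nat

sublocale local_hom_coords \<subseteq> K: coordinate_space m d
  by (rule coordinate_space.intro[OF maximal_m])

sublocale local_hom_coords \<subseteq> L: coordinate_space n d
  by (rule coordinate_space.intro[OF maximal_n])

context local_hom_coords
begin

lemma in_span_coords_image:
  assumes "K.in_span J f y"
  shows "L.in_span J (\<lambda>j i. \<phi> (f j i)) (\<lambda>i. \<phi> (y i))"
proof -
  obtain c where c: "\<forall>i<d. y i - (\<Sum>j\<in>J. c j * f j i) \<in> m"
    using assms unfolding K.in_span_iff by blast
  have "\<forall>i<d. \<phi> (y i) - (\<Sum>j\<in>J. \<phi> (c j) * \<phi> (f j i)) \<in> n"
    using phi_mem_n[OF c[rule_format]] by (simp add: \<phi>.diff \<phi>.sum phi_mult)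
  then show ?thesis
    unfolding L.in_span_iff by (intro exI[of _ "\<lambda>j. \<phi> (c j)"])
qed

lemma phi_unit_vec: "(\<lambda>i. \<phi> (K.unit_vec p i)) = L.unit_vec p"
  by (auto simp: K.unit_vec_def L.unit_vec_def \<phi>.zero ring_hom_one[OF hom])

text \<open>Complete the family to a spanning family of at most \<open>d\<close> vectors; its image in \<open>L\<^sup>d\<close>
  again spans, hence is independent.\<close>
theorem indep_coords_image:
  assumes "finite J" "K.indep J a"
  shows "L.indep J (\<lambda>j i. \<phi> (a j i))"
proof -
  define h where "h = case_sum a K.unit_vec"
  have "K.indep (Inl ` J) h"
    using assms(2) by (simp add: K.indep_image_iff h_def comp_def)
  then obtain J' where J': "Inl ` J \<subseteq> J'" "J' \<subseteq> Inl ` J \<union> Inr ` {..<d}" "K.indep J' h"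
      "\<forall>k\<in>Inr ` {..<d}. K.in_span J' h (h k)"
    using K.indep_extend[of "Inr ` {..<d}" "Inl ` J" h] assms(1) subset_UNIV by blast
  have fin: "finite J'"
    using J'(2) assms(1) finite_subset by blast
  have "card J' \<le> card {..<d}"
    by (rule K.indep_card_le_card_spanning[OF finite_lessThan _ fin J'(3), where u = K.unit_vec])
      (simp_all add: K.in_span_unit_vec)
  moreover have "\<forall>p<d. L.in_span J' (\<lambda>k i. \<phi> (h k i)) (L.unit_vec p)"
  proof (intro allI impI)
    fix p assume "p < d"
    then have "K.in_span J' h (K.unit_vec p)"
      using J'(4) by (auto simp: h_def)
    from in_span_coords_image[OF this] show "L.in_span J' (\<lambda>k i. \<phi> (h k i)) (L.unit_vec p)"
      by (simp only: phi_unit_vec)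
  qed
  ultimately have "L.indep J' (\<lambda>k i. \<phi> (h k i))"
    using L.indep_if_spanning[OF fin] by simp
  then have "L.indep (Inl ` J) (\<lambda>k i. \<phi> (h k i))"
    by (rule L.indep_subset[OF fin J'(1)])
  then show ?thesis
    by (simp add: L.indep_image_iff h_def comp_def)
qed

end

locale cotangent_coords = local_hom_coords +
  fixes x :: "nat \<Rightarrow> 'a"
  assumes cotangent_basis: "cotangent_basis m d x"
begin

lemma x_mem_m: "i < d \<Longrightarrow> x i \<in> m"
  using cotangent_basis unfolding cotangent_basis_def by blast

lemma exists_coords: "y \<in> m \<Longrightarrow> \<exists>c. y - (\<Sum>i<d. c i * x i) \<in> ideal_mult m m"
  using cotangent_basis unfolding cotangent_basis_def by blast

text \<open>The natural map \<open>m/m\<^sup>2 \<otimes>\<^sub>K L \<rightarrow> n/n\<^sup>2\<close> in the coordinates given by \<open>x\<close>.\<close>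
definition natural_map :: "(nat \<Rightarrow> 'b) \<Rightarrow> 'b" where
  "natural_map z = (\<Sum>i<d. \<phi> (x i) * z i)"

definition natural_map_kernel :: "(nat \<Rightarrow> 'b) set" where
  "natural_map_kernel = {z. natural_map z \<in> ideal_mult n n}"

lemma rd_wrt_eq_dim_kernel: "rd_wrt \<phi> n d x = L.dim natural_map_kernel"
  unfolding rd_wrt_def L.dim_def L.indep_sizes_def natural_map_kernel_def natural_map_def
    L.indep_iff tuple_indep_def
  by (simp add: Ball_def)

lemma natural_map_mem_n: "natural_map z \<in> n"
  unfolding natural_map_def using x_mem_m phi_mem_n
  by (auto intro!: is_ideal_sum[OF B.M_ideal] is_ideal_mult_right[OF B.M_ideal])

lemma natural_map_lincomb:
  "natural_map (z - (\<Sum>l\<in>J. (\<lambda>i. c l * w l i))) = natural_map z - (\<Sum>l\<in>J. c l * natural_map (w l))"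
proof -
  have "(\<Sum>i<d. \<phi> (x i) * (\<Sum>l\<in>J. c l * w l i)) = (\<Sum>i<d. \<Sum>l\<in>J. \<phi> (x i) * (c l * w l i))"
    by (simp add: sum_distrib_left)
  also have "\<dots> = (\<Sum>l\<in>J. \<Sum>i<d. \<phi> (x i) * (c l * w l i))"
    by (rule sum.swap)
  also have "\<dots> = (\<Sum>l\<in>J. \<Sum>i<d. c l * (\<phi> (x i) * w l i))"
    by (intro sum.cong refl) (rule mult.left_commute)
  finally have "(\<Sum>i<d. \<phi> (x i) * (\<Sum>l\<in>J. c l * w l i)) = (\<Sum>l\<in>J. \<Sum>i<d. c l * (\<phi> (x i) * w l i))" .
  then show ?thesis
    unfolding natural_map_def by (simp add: sum_apply right_diff_distrib sum_subtractf sum_distrib_left)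
qed

lemma natural_map_coords_image:
  "natural_map (\<lambda>i. \<phi> (a i)) = \<phi> (\<Sum>i<d. a i * x i)"
  unfolding natural_map_def by (simp add: \<phi>.sum phi_mult mult.commute)

lemma indep_coords:
  assumes "A.indep {..<e} u" "\<forall>j<e. u j - (\<Sum>i<d. a j i * x i) \<in> ideal_mult m m"
  shows "K.indep {..<e} a"
  unfolding K.indep_iff
proof (intro allI impI ballI)
  fix c j assume c: "\<forall>i<d. (\<Sum>j\<in>{..<e}. c j * a j i) \<in> m" and j: "j \<in> {..<e}"
  have "(\<Sum>i<d. (\<Sum>j<e. c j * a j i) * x i) \<in> ideal_mult m m"
    using c x_mem_m by (intro A.subspace_sum[OF A.subspace_N] mult_mem_ideal_mult) auto
  moreover have "(\<Sum>i<d. (\<Sum>j<e. c j * a j i) * x i) = (\<Sum>j<e. c j * (\<Sum>i<d. a j i * x i))"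
    unfolding sum_distrib_left sum_distrib_right by (subst sum.swap) (simp only: mult.assoc)
  moreover have "(\<Sum>j<e. c j * (u j - (\<Sum>i<d. a j i * x i))) \<in> ideal_mult m m"
    using assms(2) by (intro A.subspace_sum[OF A.subspace_N] A.subspace_scale[OF A.subspace_N]) auto
  ultimately have "(\<Sum>j<e. c j * (u j - (\<Sum>i<d. a j i * x i))) + (\<Sum>j<e. c j * (\<Sum>i<d. a j i * x i))
      \<in> ideal_mult m m"
    using A.subspace_add[OF A.subspace_N] by simp
  then have "(\<Sum>j<e. c j * u j) \<in> ideal_mult m m"
    by (simp add: right_diff_distrib sum_subtractf)
  then show "c j \<in> m"
    using assms(1) j unfolding A.indep_def by blast
qed

lemma in_span_if_natural_map_in_span:
  assumes "B.in_span J (\<lambda>l. natural_map (\<rho> l)) (natural_map y)"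
    and "\<forall>z\<in>natural_map_kernel. L.in_span K f z" "\<forall>l\<in>J. L.in_span K f (\<rho> l)"
  shows "L.in_span K f y"
proof -
  obtain c where "natural_map y - (\<Sum>l\<in>J. c l * natural_map (\<rho> l)) \<in> ideal_mult n n"
    using assms(1) unfolding B.in_span_def by blast
  then have "y - (\<Sum>l\<in>J. (\<lambda>i. c l * \<rho> l i)) \<in> natural_map_kernel"
    unfolding natural_map_kernel_def by (simp add: natural_map_lincomb)
  then have "L.in_span K f (y - (\<Sum>l\<in>J. (\<lambda>i. c l * \<rho> l i)))"
    using assms(2) by blast
  moreover have "L.in_span K f (\<Sum>l\<in>J. (\<lambda>i. c l * \<rho> l i))"
    using assms(3) by (intro L.in_span_sum L.in_span_scale) auto
  ultimately show ?thesis
    using L.in_span_add by force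
qed

theorem indep_image_rank_nullity:
  assumes "L.indep {..<e} \<rho>"
  obtains J where "J \<subseteq> {..<e}" "B.indep J (\<lambda>j. natural_map (\<rho> j))"
    "e \<le> L.dim natural_map_kernel + card J"
proof -
  let ?T = "\<lambda>j. natural_map (\<rho> j)" and ?r = "L.dim natural_map_kernel"
  have "B.indep {} ?T"
    unfolding B.indep_def by simp
  moreover have "?T ` ({} \<union> {..<e}) \<subseteq> n"
    using natural_map_mem_n by blast
  ultimately obtain J where J: "{} \<subseteq> J" "J \<subseteq> {} \<union> {..<e}" "B.indep J ?T"
      "\<forall>j\<in>{..<e}. B.in_span J ?T (?T j)"
    by (rule B.indep_extend[OF finite_lessThan finite.emptyI])
  obtain w where w: "\<forall>i<?r. w i \<in> natural_map_kernel" "\<forall>z\<in>natural_map_kernel. L.in_span {..<?r} w z"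
    using L.exists_basis[OF L.bdd_above_indep_sizes subset_UNIV] by blast
  let ?K = "{..<?r} <+> J" and ?f = "case_sum w \<rho>"
  have "finite J"
    using J(2) finite_subset by blast
  then have fin: "finite ?K"
    by simp
  have w_span: "\<forall>i\<in>{..<?r}. L.in_span ?K ?f (w i)"
    using L.in_span_member[OF fin, of "Inl _" ?f] by (simp add: InlI)
  have \<rho>_span: "\<forall>l\<in>J. L.in_span ?K ?f (\<rho> l)"
    using L.in_span_member[OF fin, of "Inr _" ?f] by (simp add: InrI)
  have "\<forall>z\<in>natural_map_kernel. L.in_span ?K ?f z"
    using w(2) w_span L.in_span_trans by blast
  then have "\<forall>j\<in>{..<e}. L.in_span ?K ?f (\<rho> j)"
    using J(4) \<rho>_span in_span_if_natural_map_in_span by blast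
  then have "card {..<e} \<le> card ?K"
    by (intro L.indep_card_le_card_spanning[OF fin _ finite_lessThan assms]) auto
  then show thesis
    using that J(2,3) \<open>finite J\<close> by (simp add: card_Plus)
qed

theorem dim_le_dim_kernel_plus_dim_ext_ideal:
  assumes "I \<subseteq> m" and bdd: "bdd_above (A.indep_sizes (ideal_add I (ideal_mult m m)))"
  shows "A.dim (ideal_add I (ideal_mult m m))
    \<le> L.dim natural_map_kernel + B.dim (ideal_add (ext_ideal \<phi> I) (ideal_mult n n))"
proof -
  let ?SA = "ideal_add I (ideal_mult m m)" and ?SB = "ideal_add (ext_ideal \<phi> I) (ideal_mult n n)"
  let ?e = "A.dim ?SA"
  have SA: "?SA \<subseteq> m"
    using assms(1) ideal_mult_subset[OF A.M_ideal] by (rule ideal_add_subset[OF A.M_ideal])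
  obtain u where u: "\<forall>j<?e. u j \<in> ?SA" "A.indep {..<?e} u"
    using A.exists_basis[OF bdd SA] by blast
  have "\<forall>j\<in>{..<?e}. \<exists>c. u j - (\<Sum>i<d. c i * x i) \<in> ideal_mult m m"
    using u(1) SA exists_coords by blast
  from bchoice[OF this] obtain a where "\<forall>j\<in>{..<?e}. u j - (\<Sum>i<d. a j i * x i) \<in> ideal_mult m m" ..
  then have a: "\<forall>j<?e. u j - (\<Sum>i<d. a j i * x i) \<in> ideal_mult m m"
    by simp
  have "L.indep {..<?e} (\<lambda>j i. \<phi> (a j i))"
    using indep_coords_image[OF finite_lessThan indep_coords[OF u(2) a]] .
  then obtain J where J: "J \<subseteq> {..<?e}" "B.indep J (\<lambda>j. natural_map (\<lambda>i. \<phi> (a j i)))"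
      "?e \<le> L.dim natural_map_kernel + card J"
    by (rule indep_image_rank_nullity)
  have "\<phi> (u j) - natural_map (\<lambda>i. \<phi> (a j i)) \<in> ideal_mult n n" if j: "j < ?e" for j
  proof -
    have "\<phi> (u j - (\<Sum>i<d. a j i * x i)) \<in> ideal_mult n n"
      using a j by (intro phi_mem_ideal_mult) blast
    then show ?thesis
      by (simp only: \<phi>.diff natural_map_coords_image)
  qed
  then have "B.indep J (\<lambda>j. \<phi> (u j))"
    using J(1) by (intro B.indep_if_diff_mem_N[OF _ J(2)]) auto
  moreover have "finite J"
    using J(1) finite_subset by blast
  moreover have "(\<lambda>j. \<phi> (u j)) ` J \<subseteq> ?SB"
    using J(1) u(1) by (auto intro: phi_mem_ideal_add_ext_ideal)
  ultimately have "card J \<le> B.dim ?SB"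
    by (intro B.card_le_dim[OF dim_ext_ideal_le(1)[OF assms]])
  with J(3) show ?thesis
    by linarith
qed

end

theorem lemma2p4:
  fixes \<phi> :: "'a::comm_ring_1 \<Rightarrow> 'b::comm_ring_1"
    and m :: "'a set" and n :: "'b set" and I :: "'a set"
  assumes "noetherian TYPE('a)" and "noetherian TYPE('b)"
    and "local_ring m" and "local_ring n"
    and "ring_hom \<phi>" and "\<phi> ` m \<subseteq> n"
    and "is_ideal I" and "I \<noteq> UNIV"
  shows "delta_B \<phi> n I \<le> delta_A m I \<and> delta_A m I - delta_B \<phi> n I \<le> rd \<phi> m n"
proof -
  interpret local_hom \<phi> m n
    using assms(3-6) by unfold_locales (simp_all add: local_ring_def)
  have "I \<subseteq> m"
    using assms(3,7,8) by (rule local_ring_ideal_subset)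
  then have bdd: "bdd_above (A.indep_sizes (ideal_add I (ideal_mult m m)))"
    using assms(1) ideal_mult_subset[OF A.M_ideal]
    by (intro A.bdd_above_indep_sizes_if_noetherian ideal_add_subset[OF A.M_ideal])
  obtain d x where "cotangent_basis m d x" "rd \<phi> m n = rd_wrt \<phi> n d x"
    using rd_eq_rd_wrt[OF assms(1)] .
  then interpret cotangent_coords \<phi> m n d x
    by unfold_locales
  show ?thesis
    unfolding delta_A_def delta_B_def A.dim_mod_eq_dim B.dim_mod_eq_dim
    using dim_ext_ideal_le(2)[OF \<open>I \<subseteq> m\<close> bdd]
      dim_le_dim_kernel_plus_dim_ext_ideal[OF \<open>I \<subseteq> m\<close> bdd] rd_wrt_eq_dim_kernel \<open>rd \<phi> m n = _\<close>
    by linarith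
qed

end
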